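(* Let $\lambda>\sup_{x\in\{a=0\}}\hat\lambda(x)$ and let $f\in C^1(A)$ be a bounded function satisfying $a(x)f'+H(x,f)=\lambda$ in $A$. Extend $f$ to $\mathbb R$ by $f(x):=p^+_\lambda(x)$ for $x\in\{a=0\}$. Then $u(x):=\int_0^xf(z)\,dz$ is a Lipschitz viscosity supersolution of $a(x)u''+H(x,u')=\lambda$ in $\mathbb R$.
   Context: Deterministic setting: $a:\mathbb R\to[0,1]$ with $\sqrt a$ $\kappa$-Lipschitz and (A1$'$): $a\not\equiv0$ and every connected component of $A:=\{a>0\}$ is a bounded interval. $H:\mathbb R\times\mathbb R\to\mathbb R$ in $\mathscr H_{sqc}(\alpha_0,\alpha_1,\gamma,\eta)$, $\gamma>2$, $\eta>0$: (H1) $\alpha_0|p|^\gamma-1/\alpha_0\le H(x,p)\le\alpha_1(|p|^\gamma+1)$, (H2) $|H(x,p)-H(x,q)|\le\alpha_1(|p|+|q|+1)^{\gamma-1}|p-q|$, (H3) $|H(x,p)-H(y,p)|\le\alpha_1(|p|^\gamma+1)|x-y|$, $H(x,\cdot)$ strictly quasiconvex with unique minimizer $\hat p(x)$, $H(x,p_1)-H(x,p_2)\ge\eta|p_1-p_2|$ for $p_1<p_2\le\hat p(x)$, $H(x,p_2)-H(x,p_1)\ge\eta|p_1-p_2|$ for $p_2>p_1\ge\hat p(x)$. $\hat\lambda(x):=\min_pH(x,p)$; for $\lambda\ge\hat\lambda(x)$, $\{p:H(x,p)\le\lambda\}=[p^-_\lambda(x),p^+_\lambda(x)]$. A continuous $u$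 is a viscosity supersolution of $au''+H(x,u')=\lambda$ if $a(x_0)\varphi''(x_0)+H(x_0,\varphi'(x_0))\le\lambda$ whenever a $C^2$ $\varphi$ touches $u$ from below at $x_0$. *)

theory Defs
  imports "HOL-Analysis.Analysis"
begin

definition strictly_quasiconvex :: "(real \<Rightarrow> real) \<Rightarrow> bool" where
  "strictly_quasiconvex g \<longleftrightarrow>
     (\<forall>p q t. p \<noteq> q \<and> 0 < t \<and> t < 1 \<longrightarrow> g (t * p + (1 - t) * q) < max (g p) (g q))"

definition is_minimizer :: "(real \<Rightarrow> real) \<Rightarrow> real \<Rightarrow> bool" where
  "is_minimizer g p \<longleftrightarrow> (\<forall>q. g p \<le> g q)"

definition hat_p :: "(real \<Rightarrow> real \<Rightarrow> real) \<Rightarrow> real \<Rightarrow> real" where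
  "hat_p H x = (THE p. is_minimizer (H x) p)"

definition hat_lambda :: "(real \<Rightarrow> real \<Rightarrow> real) \<Rightarrow> real \<Rightarrow> real" where
  "hat_lambda H x = Inf (range (H x))"

definition p_plus :: "(real \<Rightarrow> real \<Rightarrow> real) \<Rightarrow> real \<Rightarrow> real \<Rightarrow> real" where
  "p_plus H lam x = Sup {p. H x p \<le> lam}"

definition H_sqc :: "real \<Rightarrow> real \<Rightarrow> real \<Rightarrow> real \<Rightarrow> (real \<Rightarrow> real \<Rightarrow> real) \<Rightarrow> bool" where
  "H_sqc \<alpha>0 \<alpha>1 \<gamma> \<eta> H \<longleftrightarrow>
     (\<forall>x p. \<alpha>0 * \<bar>p\<bar> powr \<gamma> - 1 / \<alpha>0 \<le> H x p \<and> H x p \<le> \<alpha>1 * (\<bar>p\<bar> powr \<gamma> + 1)) \<and>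
     (\<forall>x p q. \<bar>H x p - H x q\<bar> \<le> \<alpha>1 * (\<bar>p\<bar> + \<bar>q\<bar> + 1) powr (\<gamma> - 1) * \<bar>p - q\<bar>) \<and>
     (\<forall>x y p. \<bar>H x p - H y p\<bar> \<le> \<alpha>1 * (\<bar>p\<bar> powr \<gamma> + 1) * \<bar>x - y\<bar>) \<and>
     (\<forall>x. strictly_quasiconvex (H x)) \<and>
     (\<forall>x. \<exists>!p. is_minimizer (H x) p) \<and>
     (\<forall>x p1 p2. p1 < p2 \<and> p2 \<le> hat_p H x \<longrightarrow> H x p1 - H x p2 \<ge> \<eta> * \<bar>p1 - p2\<bar>) \<and>
     (\<forall>x p1 p2. p2 > p1 \<and> p1 \<ge> hat_p H x \<longrightarrow> H x p2 - H x p1 \<ge> \<eta> * \<bar>p1 - p2\<bar>)"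

definition C2_with :: "(real \<Rightarrow> real) \<Rightarrow> (real \<Rightarrow> real) \<Rightarrow> (real \<Rightarrow> real) \<Rightarrow> bool" where
  "C2_with \<phi> \<phi>' \<phi>'' \<longleftrightarrow>
     (\<forall>x. (\<phi> has_real_derivative \<phi>' x) (at x)) \<and>
     (\<forall>x. (\<phi>' has_real_derivative \<phi>'' x) (at x)) \<and>
     continuous_on UNIV \<phi>''"

definition visc_supersol ::
  "(real \<Rightarrow> real) \<Rightarrow> (real \<Rightarrow> real \<Rightarrow> real) \<Rightarrow> real \<Rightarrow> (real \<Rightarrow> real) \<Rightarrow> bool" where
  "visc_supersol a H lam u \<longleftrightarrow> continuous_on UNIV u \<and>
     (\<forall>\<phi> \<phi>' \<phi>'' x0. C2_with \<phi> \<phi>' \<phi>'' \<and> \<phi> x0 = u x0 \<and>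
        (\<exists>\<delta>>0. \<forall>y. \<bar>y - x0\<bar> < \<delta> \<longrightarrow> \<phi> y \<le> u y)
        \<longrightarrow> a x0 * \<phi>'' x0 + H x0 (\<phi>' x0) \<le> lam)"

definition prim0 :: "(real \<Rightarrow> real) \<Rightarrow> real \<Rightarrow> real" where
  "prim0 f x = (if 0 \<le> x then integral {0..x} f else - integral {x..0} f)"

end

theory Submission
  imports Defs
begin

text \<open>On \<open>{a > 0}\<close> the primitive \<open>u\<close> of \<open>f\<close> is twice differentiable with \<open>u' = f\<close>, so the
  supersolution inequality at a touching point follows from the first- and second-order conditions
  for the minimum of \<open>u - \<phi>\<close> together with the equation. At a zero \<open>x0\<close> of \<open>a\<close> the test slope
  \<open>P = \<phi>'(x0)\<close> must satisfy \<open>H(x0,P) \<le> \<lambda>\<close>. Otherwise \<open>P\<close> lies on one side of some \<open>p0\<close> with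
  \<open>H(x0,p0) < \<lambda>\<close>, and there is a level \<open>q\<close> strictly between them with \<open>H(x0,q) > \<lambda>\<close>. By
  quasiconvexity the equation \<open>a f' = \<lambda> - H(x,f)\<close> gives \<open>f' \<le> -c/a\<close> wherever \<open>f\<close> is beyond \<open>q\<close>;
  as \<open>\<surd>a\<close> is Lipschitz, \<open>a\<close> vanishes quadratically at its zeros, so a bounded \<open>f\<close> cannot cross
  \<open>q\<close> near \<open>x0\<close> (it would blow up like \<open>1/(z - l)\<close>). Hence \<open>u\<close> grows with slope at most \<open>q\<close>
  to the right of \<open>x0\<close> (at least \<open>q\<close> to the left), incompatible with \<open>\<phi>\<close> touching \<open>u\<close> from below
  with slope \<open>P\<close>. Continuity of \<open>p\<^sup>+\<^sub>\<lambda>\<close> on \<open>{a = 0}\<close> makes \<open>f\<close> measurable, hence \<open>u\<close> Lipschitz.\<close>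

lemma strictly_quasiconvexD:
  assumes "strictly_quasiconvex g" "p < q" "q < r"
  shows "g q < max (g p) (g r)"
proof -
  define t where "t = (r - q) / (r - p)"
  have t: "0 < t" "t < 1" using assms(2,3) by (auto simp: t_def field_simps)
  have "t * p + (1 - t) * r = ((r - q) * p + (q - p) * r) / (r - p)"
    using assms(2,3) by (simp add: t_def divide_simps)
  also have "\<dots> = q * (r - p) / (r - p)"
    by (simp add: algebra_simps)
  also have "\<dots> = q"
    using assms(2,3) by simp
  finally have "t * p + (1 - t) * r = q" .
  with assms t show ?thesis
    unfolding strictly_quasiconvex_def by (metis less_irrefl less_trans)
qed

lemma strictly_quasiconvex_rises_right:
  assumes "strictly_quasiconvex g" "p0 < q" "q < p" "g p0 \<le> g q"
  shows "g q < g p"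
  using strictly_quasiconvexD[OF assms(1-3)] assms(4) by (auto simp: max_def split: if_splits)

lemma strictly_quasiconvex_rises_left:
  assumes "strictly_quasiconvex g" "p < q" "q < p0" "g p0 \<le> g q"
  shows "g q < g p"
  using strictly_quasiconvexD[OF assms(1-3)] assms(4) by (auto simp: max_def split: if_splits)

lemma last_zero_before:
  fixes a :: "real \<Rightarrow> real"
  assumes "continuous_on {x0..y} a" "\<And>z. 0 \<le> a z" "a x0 = 0" "x0 \<le> y" "0 < a y"
  obtains l where "x0 \<le> l" "l < y" "a l = 0" "\<And>z. l < z \<Longrightarrow> z \<le> y \<Longrightarrow> 0 < a z"
proof -
  define T where "T = {t \<in> {x0..y}. a t = 0}"
  have "closed T"
    unfolding T_def by (rule continuous_closed_preimage_constant) (use assms(1) in auto)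
  moreover have "x0 \<in> T" "bdd_above T" using assms(3,4) by (auto simp: T_def bdd_above_def)
  ultimately have "Sup T \<in> T" using closed_contains_Sup by blast
  then have l: "x0 \<le> Sup T" "Sup T \<le> y" "a (Sup T) = 0" by (auto simp: T_def)
  have "0 < a z" if "Sup T < z" "z \<le> y" for z
  proof (rule ccontr)
    assume "\<not> 0 < a z"
    then have "z \<in> T" using assms(2)[of z] l that by (auto simp: T_def)
    then show False using cSup_upper[OF _ \<open>bdd_above T\<close>] that by fastforce
  qed
  moreover have "Sup T < y" using l assms(5) by (metis less_irrefl order_le_less)
  ultimately show thesis using that l by blast
qed

lemma greater_propagates_leftward:
  fixes f f' :: "real \<Rightarrow> real"
  assumes "l < y" "q < f y"
    and deriv: "\<And>z. l < z \<Longrightarrow> z \<le> y \<Longrightarrow> (f has_real_derivative f' z) (at z)"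
    and decreasing: "\<And>z. l < z \<Longrightarrow> z \<le> y \<Longrightarrow> q < f z \<Longrightarrow> f' z \<le> 0"
    and "l < z" "z \<le> y"
  shows "q < f z"
proof (rule ccontr)
  assume "\<not> q < f z"
  define S where "S = {t \<in> {z..y}. f t \<le> q}"
  have "continuous_on {z..y} f"
    using deriv \<open>l < z\<close> by (intro continuous_at_imp_continuous_on) (meson DERIV_isCont atLeastAtMost_iff less_le_trans)
  then have "closed S"
    using continuous_closed_preimage[OF _ closed_atLeastAtMost closed_atMost, of z y f q]
    by (simp add: S_def vimage_def Int_def)
  moreover have "z \<in> S" "bdd_above S" using \<open>\<not> q < f z\<close> \<open>z \<le> y\<close> by (auto simp: S_def bdd_above_def)
  ultimately have "Sup S \<in> S" using closed_contains_Sup by blast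
  then have s: "z \<le> Sup S" "Sup S \<le> y" "f (Sup S) \<le> q" by (auto simp: S_def)
  then have "Sup S < y" using \<open>q < f y\<close> by (metis not_less order_le_less)
  then obtain \<xi> where \<xi>: "Sup S < \<xi>" "\<xi> < y" "f y - f (Sup S) = (y - Sup S) * f' \<xi>"
    using MVT2[of "Sup S" y f f'] deriv s \<open>l < z\<close> by force
  have "\<xi> \<notin> S" using \<xi>(1) cSup_upper[OF _ \<open>bdd_above S\<close>] by force
  then have "f' \<xi> \<le> 0" using decreasing \<xi> s \<open>l < z\<close> by (auto simp: S_def)
  then have "(y - Sup S) * f' \<xi> \<le> 0" using \<open>Sup S < y\<close> by (simp add: mult_nonneg_nonpos)
  then have "f y \<le> f (Sup S)" using \<xi>(3) by simp
  then show False using s \<open>q < f y\<close> by simp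
qed

text \<open>Integrating \<open>f' \<le> -C/(z-l)\<^sup>2\<close> backwards from \<open>y\<close> gives \<open>f z \<ge> f y - C/(y-l) + C/(z-l)\<close>.\<close>
lemma inverse_square_drift_unbounded:
  fixes f f' :: "real \<Rightarrow> real"
  assumes "l < y" "0 < C"
    and deriv: "\<And>z. l < z \<Longrightarrow> z \<le> y \<Longrightarrow> (f has_real_derivative f' z) (at z)"
    and drift: "\<And>z. l < z \<Longrightarrow> z \<le> y \<Longrightarrow> f' z \<le> - C / (z - l)\<^sup>2"
    and bound: "\<And>z. l < z \<Longrightarrow> z \<le> y \<Longrightarrow> \<bar>f z\<bar> \<le> B"
  shows False
proof -
  define w where "w z = f z - C / (z - l)" for z
  have w_deriv: "(w has_real_derivative f' z + C / (z - l)\<^sup>2) (at z)" if "l < z" "z \<le> y" for z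
    unfolding w_def using that
    by (auto intro!: derivative_eq_intros deriv simp: power2_eq_square field_simps)
  have w_mono: "w y \<le> w z" if "l < z" "z \<le> y" for z
  proof (rule DERIV_nonpos_imp_nonincreasing[of z y w])
    fix x assume "z \<le> x" "x \<le> y"
    with that have "l < x" by simp
    with \<open>x \<le> y\<close> show "\<exists>D. (w has_real_derivative D) (at x) \<and> D \<le> 0"
      using w_deriv drift by force
  qed (use that in simp)
  have "0 \<le> B" using bound[OF \<open>l < y\<close>] by simp
  define d where "d = min ((y - l) / 2) (C / (B + \<bar>w y\<bar> + 1))"
  have "d \<le> (y - l) / 2" unfolding d_def by (rule min.cobounded1)
  then have d: "0 < d" "l + d \<le> y" using \<open>0 \<le> B\<close> \<open>l < y\<close> \<open>0 < C\<close> by (auto simp: d_def)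
  have "d \<le> C / (B + \<bar>w y\<bar> + 1)" unfolding d_def by (rule min.cobounded2)
  then have "d * (B + \<bar>w y\<bar> + 1) \<le> C"
    using \<open>0 \<le> B\<close> by (simp add: le_divide_eq)
  then have "B + \<bar>w y\<bar> + 1 \<le> C / d" using d(1) by (simp add: le_divide_eq mult.commute)
  then have "w y + B + \<bar>w y\<bar> + 1 \<le> f (l + d)" using w_mono[of "l + d"] d by (simp add: w_def)
  then show False using bound[of "l + d"] d by linarith
qed

text \<open>If \<open>f y > q\<close>, then \<open>f > q\<close> all the way back to the last zero \<open>l\<close> of \<open>a\<close> before \<open>y\<close>, and there
  \<open>f' \<le> -c/a \<le> -(c/K\<^sup>2)/(z - l)\<^sup>2\<close> makes \<open>f\<close> unbounded.\<close>
lemma ode_barrier_right: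
  fixes a f f' :: "real \<Rightarrow> real"
  assumes a_cont: "continuous_on UNIV a" and a_nonneg: "\<And>z. 0 \<le> a z"
    and a_quadratic: "\<And>z w. a w = 0 \<Longrightarrow> a z \<le> K\<^sup>2 * (z - w)\<^sup>2" and "0 < K"
    and "a x = 0" "x \<le> y" "0 < a y" "0 < c"
    and deriv: "\<And>z. x \<le> z \<Longrightarrow> z \<le> y \<Longrightarrow> 0 < a z \<Longrightarrow> (f has_real_derivative f' z) (at z)"
    and bound: "\<And>z. x \<le> z \<Longrightarrow> z \<le> y \<Longrightarrow> 0 < a z \<Longrightarrow> \<bar>f z\<bar> \<le> B"
    and drift: "\<And>z. x \<le> z \<Longrightarrow> z \<le> y \<Longrightarrow> 0 < a z \<Longrightarrow> q < f z \<Longrightarrow> f' z \<le> - c / a z"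
  shows "f y \<le> q"
proof (rule ccontr)
  assume "\<not> f y \<le> q"
  obtain l where l: "x \<le> l" "l < y" "a l = 0" and a_pos: "\<And>z. l < z \<Longrightarrow> z \<le> y \<Longrightarrow> 0 < a z"
    using last_zero_before[OF continuous_on_subset[OF a_cont] a_nonneg \<open>a x = 0\<close> \<open>x \<le> y\<close> \<open>0 < a y\<close>]
    by blast
  have deriv': "(f has_real_derivative f' z) (at z)" and bound': "\<bar>f z\<bar> \<le> B"
    and drift': "q < f z \<Longrightarrow> f' z \<le> - c / a z" if "l < z" "z \<le> y" for z
    using deriv bound drift a_pos that l by auto
  have above: "q < f z" if "l < z" "z \<le> y" for z
  proof (rule greater_propagates_leftward[OF \<open>l < y\<close> _ deriv'])
    show "q < f y" using \<open>\<not> f y \<le> q\<close> by simp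
    show "f' z \<le> 0" if "l < z" "z \<le> y" "q < f z" for z
    proof -
      have "0 < c / a z" using a_pos[OF that(1,2)] \<open>0 < c\<close> by simp
      then show ?thesis using drift'[OF that] by linarith
    qed
  qed (use that in simp_all)
  have "f' z \<le> - (c / K\<^sup>2) / (z - l)\<^sup>2" if "l < z" "z \<le> y" for z
  proof -
    have "0 < a z" "a z \<le> K\<^sup>2 * (z - l)\<^sup>2" using a_pos[OF that] a_quadratic[OF \<open>a l = 0\<close>] by auto
    then have "c / (K\<^sup>2 * (z - l)\<^sup>2) \<le> c / a z" using \<open>0 < c\<close> by (intro divide_left_mono) auto
    then show ?thesis using drift'[OF that above[OF that]] by simp
  qed
  from inverse_square_drift_unbounded[OF \<open>l < y\<close> _ deriv' this bound']
  show False using \<open>0 < c\<close> \<open>0 < K\<close> by simp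
qed

lemma ode_barrier_left:
  fixes a f f' :: "real \<Rightarrow> real"
  assumes a_cont: "continuous_on UNIV a" and a_nonneg: "\<And>z. 0 \<le> a z"
    and a_quadratic: "\<And>z w. a w = 0 \<Longrightarrow> a z \<le> K\<^sup>2 * (z - w)\<^sup>2" and "0 < K"
    and "a x = 0" "y \<le> x" "0 < a y" "0 < c"
    and deriv: "\<And>z. y \<le> z \<Longrightarrow> z \<le> x \<Longrightarrow> 0 < a z \<Longrightarrow> (f has_real_derivative f' z) (at z)"
    and bound: "\<And>z. y \<le> z \<Longrightarrow> z \<le> x \<Longrightarrow> 0 < a z \<Longrightarrow> \<bar>f z\<bar> \<le> B"
    and drift: "\<And>z. y \<le> z \<Longrightarrow> z \<le> x \<Longrightarrow> 0 < a z \<Longrightarrow> f z < q \<Longrightarrow> f' z \<le> - c / a z"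
  shows "q \<le> f y"
proof -
  have "(\<lambda>z. - f (- z)) (- y) \<le> - q"
  proof (rule ode_barrier_right[where a = "\<lambda>z. a (- z)" and f = "\<lambda>z. - f (- z)"
        and f' = "\<lambda>z. f' (- z)" and x = "- x" and y = "- y" and q = "- q" and B = B and c = c and K = K])
    show "continuous_on UNIV (\<lambda>z. a (- z))"
      by (rule continuous_on_compose2[OF a_cont]) (auto intro: continuous_intros)
    show "a (- z) \<le> K\<^sup>2 * (z - w)\<^sup>2" if "a (- w) = 0" for z w
      using a_quadratic[OF that, of "- z"] by (simp add: power2_commute)
    show "((\<lambda>z. - f (- z)) has_real_derivative f' (- z)) (at z)"
      if "- x \<le> z" "z \<le> - y" "0 < a (- z)" for z
    proof -
      have "(f has_real_derivative f' (- z)) (at (- z))" using deriv[of "- z"] that by simp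
      then show ?thesis using DERIV_minus DERIV_mirror by fastforce
    qed
    show "\<bar>- f (- z)\<bar> \<le> B" if "- x \<le> z" "z \<le> - y" "0 < a (- z)" for z
      using bound[of "- z"] that by simp
    show "f' (- z) \<le> - c / a (- z)" if "- x \<le> z" "z \<le> - y" "0 < a (- z)" "- q < - f (- z)" for z
      using drift[of "- z"] that by simp
  qed (use assms(2,4-8) in auto)
  then show ?thesis by simp
qed

definition touches_below :: "(real \<Rightarrow> real) \<Rightarrow> (real \<Rightarrow> real) \<Rightarrow> real \<Rightarrow> bool" where
  "touches_below \<phi> u x0 \<longleftrightarrow> \<phi> x0 = u x0 \<and> (\<exists>\<delta>>0. \<forall>y. \<bar>y - x0\<bar> < \<delta> \<longrightarrow> \<phi> y \<le> u y)"

lemma visc_supersolI: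
  assumes "continuous_on UNIV u"
    and "\<And>\<phi> \<phi>' \<phi>'' x0. C2_with \<phi> \<phi>' \<phi>'' \<Longrightarrow> touches_below \<phi> u x0 \<Longrightarrow> a x0 * \<phi>'' x0 + H x0 (\<phi>' x0) \<le> lam"
  shows "visc_supersol a H lam u"
  using assms unfolding visc_supersol_def touches_below_def by blast

lemma local_min_second_derivative_nonneg:
  fixes \<psi> \<psi>' :: "real \<Rightarrow> real"
  assumes "0 < \<delta>" and min: "\<And>y. \<bar>y - x0\<bar> < \<delta> \<Longrightarrow> \<psi> x0 \<le> \<psi> y"
    and deriv: "\<And>y. \<bar>y - x0\<bar> < \<delta> \<Longrightarrow> (\<psi> has_real_derivative \<psi>' y) (at y)"
    and deriv2: "(\<psi>' has_real_derivative D) (at x0)"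
  shows "0 \<le> D"
proof (rule ccontr)
  assume "\<not> 0 \<le> D"
  have "\<forall>y. \<bar>x0 - y\<bar> < \<delta> \<longrightarrow> \<psi> x0 \<le> \<psi> y" using min by (simp add: abs_minus_commute)
  then have "\<psi>' x0 = 0" using DERIV_local_min[OF deriv[of x0] \<open>0 < \<delta>\<close>] \<open>0 < \<delta>\<close> by simp
  obtain d where "0 < d" and decr: "\<And>h. 0 < h \<Longrightarrow> h < d \<Longrightarrow> \<psi>' (x0 + h) < \<psi>' x0"
    using DERIV_neg_dec_right[OF deriv2] \<open>\<not> 0 \<le> D\<close> by (meson not_le)
  define h where "h = min d \<delta> / 2"
  have h: "0 < h" "h < d" "h < \<delta>" using \<open>0 < d\<close> \<open>0 < \<delta>\<close> by (auto simp: h_def)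
  have "(\<psi> has_real_derivative \<psi>' y) (at y)" if "x0 \<le> y" "y \<le> x0 + h" for y
    using deriv that h by simp
  then obtain \<xi> where \<xi>: "x0 < \<xi>" "\<xi> < x0 + h" "\<psi> (x0 + h) - \<psi> x0 = (x0 + h - x0) * \<psi>' \<xi>"
    using MVT2[of x0 "x0 + h" \<psi> \<psi>'] h(1) by auto
  have "\<psi>' \<xi> < 0" using decr[of "\<xi> - x0"] \<xi> h \<open>\<psi>' x0 = 0\<close> by simp
  then have "h * \<psi>' \<xi> < 0" using h(1) by (rule mult_pos_neg[rotated])
  then have "\<psi> (x0 + h) < \<psi> x0" using \<xi>(3) by simp
  then show False using min[of "x0 + h"] h by simp
qed

lemma touches_below_local_min:
  assumes "touches_below \<phi> u x0"
  obtains \<delta> where "0 < \<delta>" "\<And>y. \<bar>y - x0\<bar> < \<delta> \<Longrightarrow> u x0 - \<phi> x0 \<le> u y - \<phi> y"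
  using assms unfolding touches_below_def by force

lemma touches_below_derivative_eq:
  assumes "touches_below \<phi> u x0"
    and "(\<phi> has_real_derivative P) (at x0)" "(u has_real_derivative D) (at x0)"
  shows "P = D"
proof -
  obtain \<delta> where "0 < \<delta>" "\<And>y. \<bar>y - x0\<bar> < \<delta> \<Longrightarrow> u x0 - \<phi> x0 \<le> u y - \<phi> y"
    using touches_below_local_min[OF assms(1)] by blast
  then have "\<forall>y. \<bar>x0 - y\<bar> < \<delta> \<longrightarrow> u x0 - \<phi> x0 \<le> u y - \<phi> y" by (simp add: abs_minus_commute)
  then have "D - P = 0"
    using DERIV_local_min[OF DERIV_diff[OF assms(3,2)] \<open>0 < \<delta>\<close>] by simp
  then show ?thesis by simp
qed

lemma touches_below_second_derivative_le:
  assumes "touches_below \<phi> u x0" "0 < \<delta>"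
    and "\<And>y. \<bar>y - x0\<bar> < \<delta> \<Longrightarrow> (u has_real_derivative g y) (at y)"
    and "\<And>y. (\<phi> has_real_derivative \<phi>' y) (at y)"
    and "(g has_real_derivative D) (at x0)" "(\<phi>' has_real_derivative E) (at x0)"
  shows "E \<le> D"
proof -
  obtain \<delta>' where "0 < \<delta>'" and min: "\<And>y. \<bar>y - x0\<bar> < \<delta>' \<Longrightarrow> u x0 - \<phi> x0 \<le> u y - \<phi> y"
    using touches_below_local_min[OF assms(1)] by blast
  have "0 \<le> D - E"
  proof (rule local_min_second_derivative_nonneg[where \<psi> = "\<lambda>y. u y - \<phi> y"])
    show "0 < min \<delta> \<delta>'" using \<open>0 < \<delta>\<close> \<open>0 < \<delta>'\<close> by simp
    show "((\<lambda>y. u y - \<phi> y) has_real_derivative g y - \<phi>' y) (at y)" if "\<bar>y - x0\<bar> < min \<delta> \<delta>'" for y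
      using DERIV_diff[OF assms(3) assms(4)] that by simp
  qed (use min DERIV_diff[OF assms(5,6)] in auto)
  then show ?thesis by simp
qed

lemma touches_below_slope_right:
  assumes "touches_below \<phi> u x0" "(\<phi> has_real_derivative P) (at x0)" "0 < \<delta>"
    and "\<And>y. x0 \<le> y \<Longrightarrow> y < x0 + \<delta> \<Longrightarrow> u y \<le> u x0 + q * (y - x0)"
  shows "P \<le> q"
proof (rule ccontr)
  assume "\<not> P \<le> q"
  have "((\<lambda>y. \<phi> y - q * y) has_real_derivative P - q) (at x0)"
    using assms(2) by (auto intro!: derivative_eq_intros)
  from DERIV_pos_inc_right[OF this] obtain d
    where "0 < d" and incr: "\<And>h. 0 < h \<Longrightarrow> h < d \<Longrightarrow> \<phi> x0 - q * x0 < \<phi> (x0 + h) - q * (x0 + h)"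
    using \<open>\<not> P \<le> q\<close> by auto
  obtain \<delta>' where "0 < \<delta>'" "\<phi> x0 = u x0" and below: "\<And>y. \<bar>y - x0\<bar> < \<delta>' \<Longrightarrow> \<phi> y \<le> u y"
    using assms(1) unfolding touches_below_def by blast
  define h where "h = min d (min \<delta> \<delta>') / 2"
  have h: "0 < h" "h < d" "h < \<delta>" "h < \<delta>'" using \<open>0 < d\<close> \<open>0 < \<delta>\<close> \<open>0 < \<delta>'\<close> by (auto simp: h_def)
  have "\<phi> (x0 + h) \<le> \<phi> x0 + q * h" using below[of "x0 + h"] assms(4)[of "x0 + h"] h \<open>\<phi> x0 = u x0\<close> by simp
  then show False using incr[OF h(1,2)] by (simp add: algebra_simps)
qed

lemma touches_below_slope_left:
  assumes "touches_below \<phi> u x0" "(\<phi> has_real_derivative P) (at x0)" "0 < \<delta>"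
    and "\<And>y. x0 - \<delta> < y \<Longrightarrow> y \<le> x0 \<Longrightarrow> u y \<le> u x0 + q * (y - x0)"
  shows "q \<le> P"
proof (rule ccontr)
  assume "\<not> q \<le> P"
  have "((\<lambda>y. \<phi> y - q * y) has_real_derivative P - q) (at x0)"
    using assms(2) by (auto intro!: derivative_eq_intros)
  from DERIV_neg_dec_left[OF this] obtain d
    where "0 < d" and decr: "\<And>h. 0 < h \<Longrightarrow> h < d \<Longrightarrow> \<phi> x0 - q * x0 < \<phi> (x0 - h) - q * (x0 - h)"
    using \<open>\<not> q \<le> P\<close> by auto
  obtain \<delta>' where "0 < \<delta>'" "\<phi> x0 = u x0" and below: "\<And>y. \<bar>y - x0\<bar> < \<delta>' \<Longrightarrow> \<phi> y \<le> u y"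
    using assms(1) unfolding touches_below_def by blast
  define h where "h = min d (min \<delta> \<delta>') / 2"
  have h: "0 < h" "h < d" "h < \<delta>" "h < \<delta>'" using \<open>0 < d\<close> \<open>0 < \<delta>\<close> \<open>0 < \<delta>'\<close> by (auto simp: h_def)
  have "\<phi> (x0 - h) \<le> \<phi> x0 - q * h" using below[of "x0 - h"] assms(4)[of "x0 - h"] h \<open>\<phi> x0 = u x0\<close> by simp
  then show False using decr[OF h(1,2)] by (simp add: algebra_simps)
qed

lemma borel_measurable_lebesgue_piecewise_continuous:
  fixes f :: "real \<Rightarrow> real"
  assumes "open S" "continuous_on S f" "continuous_on (- S) f"
  shows "f \<in> borel_measurable lebesgue"
proof -
  have "S \<in> sets lebesgue" "- S \<in> sets lebesgue"
    using assms(1) by (simp_all add: borel_open borel_closed closed_Compl)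
  then have "(\<lambda>x. if x \<in> S then f x else 0) \<in> borel_measurable lebesgue"
    "(\<lambda>x. if x \<in> - S then f x else 0) \<in> borel_measurable lebesgue"
    using continuous_imp_measurable_on_sets_lebesgue assms(2,3) by (blast intro: borel_measurable_if_I)+
  from borel_measurable_add[OF this]
  show ?thesis by (rule measurable_cong[THEN iffD1, rotated]) simp
qed

lemma integrable_on_interval_bounded_measurable:
  fixes f :: "real \<Rightarrow> real"
  assumes "f \<in> borel_measurable lebesgue" "\<And>x. \<bar>f x\<bar> \<le> B"
  shows "f integrable_on {s..t}"
proof (rule measurable_bounded_by_integrable_imp_integrable[where g = "\<lambda>_. B"])
  show "f \<in> borel_measurable (lebesgue_on {s..t})"
    using assms(1) by (rule measurable_restrict_space1)
qed (use assms(2) in auto)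

lemma prim0_diff:
  assumes intg: "\<And>s t. f integrable_on {s..t}" and "s \<le> t"
  shows "prim0 f t - prim0 f s = integral {s..t} f"
proof -
  consider "0 \<le> s" | "s \<le> 0" "0 \<le> t" | "t \<le> 0" using \<open>s \<le> t\<close> by linarith
  then show ?thesis
  proof cases
    case 1
    then show ?thesis
      using Henstock_Kurzweil_Integration.integral_combine[OF _ \<open>s \<le> t\<close> intg, of 0] \<open>s \<le> t\<close>
      by (simp add: prim0_def)
  next
    case 2
    then show ?thesis
      using Henstock_Kurzweil_Integration.integral_combine[OF 2 intg] by (simp add: prim0_def)
  next
    case 3
    then have "integral {s..0} f = integral {s..t} f + integral {t..0} f"
      using Henstock_Kurzweil_Integration.integral_combine[OF \<open>s \<le> t\<close> 3 intg] by simp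
    then show ?thesis using 3 \<open>s \<le> t\<close> by (cases "t = 0") (simp_all add: prim0_def)
  qed
qed

lemma prim0_diff_le:
  assumes "\<And>s t. f integrable_on {s..t}" "s \<le> t" "\<And>z. s \<le> z \<Longrightarrow> z \<le> t \<Longrightarrow> f z \<le> q"
  shows "prim0 f t - prim0 f s \<le> q * (t - s)"
proof -
  have "integral {s..t} f \<le> integral {s..t} (\<lambda>_. q)"
    using assms by (intro integral_le) auto
  then show ?thesis using prim0_diff[OF assms(1,2)] assms(2) by (simp add: mult.commute)
qed

lemma prim0_diff_ge:
  assumes "\<And>s t. f integrable_on {s..t}" "s \<le> t" "\<And>z. s \<le> z \<Longrightarrow> z \<le> t \<Longrightarrow> q \<le> f z"
  shows "q * (t - s) \<le> prim0 f t - prim0 f s"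
proof -
  have "integral {s..t} (\<lambda>_. q) \<le> integral {s..t} f"
    using assms by (intro integral_le) auto
  then show ?thesis using prim0_diff[OF assms(1,2)] assms(2) by (simp add: mult.commute)
qed

lemma prim0_lipschitz:
  fixes f :: "real \<Rightarrow> real"
  assumes "f \<in> borel_measurable lebesgue" "\<And>x. \<bar>f x\<bar> \<le> B"
  shows "B-lipschitz_on UNIV (prim0 f)"
proof -
  have intg: "\<And>s t. f integrable_on {s..t}"
    using integrable_on_interval_bounded_measurable[OF assms] .
  have "\<bar>prim0 f t - prim0 f s\<bar> \<le> B * \<bar>t - s\<bar>" if "s \<le> t" for s t
  proof -
    have "\<And>z. f z \<le> B" "\<And>z. - B \<le> f z" using assms(2) abs_le_iff by (metis minus_le_iff)+
    then have "prim0 f t - prim0 f s \<le> B * (t - s)" "- B * (t - s) \<le> prim0 f t - prim0 f s"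
      using prim0_diff_le[OF intg that, of B] prim0_diff_ge[OF intg that, of "- B"] by blast+
    then show ?thesis using that by (simp add: abs_le_iff)
  qed
  then have "\<bar>prim0 f x - prim0 f y\<bar> \<le> B * \<bar>x - y\<bar>" for x y
    by (cases "y \<le> x") (force simp: abs_minus_commute)+
  moreover have "0 \<le> B" using assms(2)[of 0] by simp
  ultimately show ?thesis by (simp add: lipschitz_on_def dist_real_def)
qed

lemma prim0_has_real_derivative:
  assumes "\<And>s t. f integrable_on {s..t}" "isCont f x"
  shows "(prim0 f has_real_derivative f x) (at x)"
proof -
  have "((\<lambda>y. integral {x - 1..y} f) has_real_derivative f x) (at x within {x - 1..x + 1})"
    using integral_has_vector_derivative_continuous_at[of f "x - 1" "x + 1" x "{}"] assms
    by (simp add: has_real_derivative_iff_has_vector_derivative continuous_at_imp_continuous_within)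
  then have "((\<lambda>y. prim0 f (x - 1) + integral {x - 1..y} f) has_real_derivative f x) (at x)"
    by (subst (asm) at_within_interior) (auto intro: DERIV_const[THEN DERIV_add, simplified])
  then show ?thesis
  proof (rule has_field_derivative_transform_within_open[where S = "{x - 1<..<x + 1}"])
    show "prim0 f (x - 1) + integral {x - 1..y} f = prim0 f y" if "y \<in> {x - 1<..<x + 1}" for y
      using prim0_diff[OF assms(1), of "x - 1" y] that by simp
  qed simp_all
qed

locale sqc_hamiltonian =
  fixes \<alpha>0 \<alpha>1 \<gamma> \<eta> :: real and H :: "real \<Rightarrow> real \<Rightarrow> real"
  assumes H_class: "H_sqc \<alpha>0 \<alpha>1 \<gamma> \<eta> H"
    and \<alpha>0_pos: "0 < \<alpha>0" and \<alpha>1_pos: "0 < \<alpha>1" and \<gamma>_ge_1: "1 \<le> \<gamma>"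
begin

lemma H_lower: "\<alpha>0 * \<bar>p\<bar> powr \<gamma> - 1 / \<alpha>0 \<le> H x p"
  using H_class unfolding H_sqc_def by blast

lemma H_zero_le: "H x 0 \<le> \<alpha>1"
proof -
  have "H x 0 \<le> \<alpha>1 * (\<bar>0\<bar> powr \<gamma> + 1)" using H_class unfolding H_sqc_def by blast
  then show ?thesis by simp
qed

lemma quasiconvex: "strictly_quasiconvex (H x)"
  using H_class unfolding H_sqc_def by blast

lemma isCont_H_x: "isCont (\<lambda>y. H y p) x"
proof -
  have "(\<alpha>1 * (\<bar>p\<bar> powr \<gamma> + 1))-lipschitz_on UNIV (\<lambda>y. H y p)"
    using H_class \<alpha>1_pos unfolding H_sqc_def lipschitz_on_def dist_real_def by simp
  then show ?thesis
    using lipschitz_on_continuous_on continuous_on_eq_continuous_at[OF open_UNIV] by blast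
qed

lemma isCont_H_p: "isCont (H x) p"
proof -
  define M where "M = \<alpha>1 * (2 * \<bar>p\<bar> + 3) powr (\<gamma> - 1)"
  have "M-lipschitz_on (ball p 1) (H x)"
    unfolding lipschitz_on_def
  proof (intro conjI ballI)
    show "0 \<le> M" using \<alpha>1_pos by (simp add: M_def)
    fix q r assume "q \<in> ball p 1" "r \<in> ball p 1"
    then have "\<bar>q\<bar> + \<bar>r\<bar> + 1 \<le> 2 * \<bar>p\<bar> + 3" by (auto simp: dist_real_def)
    then have "(\<bar>q\<bar> + \<bar>r\<bar> + 1) powr (\<gamma> - 1) \<le> (2 * \<bar>p\<bar> + 3) powr (\<gamma> - 1)"
      using \<gamma>_ge_1 by (intro powr_mono2) auto
    then have "\<alpha>1 * (\<bar>q\<bar> + \<bar>r\<bar> + 1) powr (\<gamma> - 1) * \<bar>q - r\<bar> \<le> M * \<bar>q - r\<bar>"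
      unfolding M_def using \<alpha>1_pos by (intro mult_right_mono) auto
    moreover have "\<bar>H x q - H x r\<bar> \<le> \<alpha>1 * (\<bar>q\<bar> + \<bar>r\<bar> + 1) powr (\<gamma> - 1) * \<bar>q - r\<bar>"
      using H_class unfolding H_sqc_def by blast
    ultimately show "dist (H x q) (H x r) \<le> M * dist q r" by (simp add: dist_real_def)
  qed
  then have "continuous_on (ball p 1) (H x)" by (rule lipschitz_on_continuous_on)
  then show ?thesis
    by (meson centre_in_ball continuous_on_eq_continuous_at open_ball zero_less_one)
qed

lemma H_greater_left_of:
  assumes "lam < H x P" "p0 < P"
  obtains q where "p0 < q" "q < P" "lam < H x q"
proof -
  have "(H x \<longlongrightarrow> H x P) (at_left P)"
    using tendsto_mono[OF at_le[OF subset_UNIV]] isCont_H_p[where x = x and p = P]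
    unfolding isCont_def by blast
  then have "\<forall>\<^sub>F q in at_left P. q \<in> {p0<..<P} \<and> lam < H x q"
    by (intro eventually_conj eventually_at_left_real assms(2) order_tendstoD(1)[OF _ assms(1)])
  then show thesis
    using that eventually_happens'[OF trivial_limit_at_left_real] by auto
qed

lemma H_greater_right_of:
  assumes "lam < H x P" "P < p0"
  obtains q where "P < q" "q < p0" "lam < H x q"
proof -
  have "(H x \<longlongrightarrow> H x P) (at_right P)"
    using tendsto_mono[OF at_le[OF subset_UNIV]] isCont_H_p[where x = x and p = P]
    unfolding isCont_def by blast
  then have "\<forall>\<^sub>F q in at_right P. q \<in> {P<..<p0} \<and> lam < H x q"
    by (intro eventually_conj eventually_at_right_real assms(2) order_tendstoD(1)[OF _ assms(1)])
  then show thesis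
    using that eventually_happens'[OF trivial_limit_at_right_real] by auto
qed

lemma tendsto_nhds_H_x: "((\<lambda>y. H y p) \<longlongrightarrow> H x p) (nhds x)"
  using isCont_H_x[where x = x and p = p] tendsto_at_iff_tendsto_nhds[of "\<lambda>y. H y p" x]
  unfolding isCont_def by simp

lemma eventually_H_less: "H x p < c \<Longrightarrow> \<forall>\<^sub>F y in nhds x. H y p < c"
  using order_tendstoD(2)[OF tendsto_nhds_H_x] .

lemma eventually_H_greater: "c < H x p \<Longrightarrow> \<forall>\<^sub>F y in nhds x. c < H y p"
  using order_tendstoD(1)[OF tendsto_nhds_H_x] .

lemma eventually_at_H_less: "H x p < c \<Longrightarrow> \<forall>\<^sub>F y in at x. H y p < c"
  using order_tendstoD(2)[OF isCont_H_x[where x = x and p = p, unfolded isCont_def]] by simp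

lemma H_separation_near:
  assumes "H x p0 < lam" "lam < H x q"
  obtains c \<delta> where "0 < c" "0 < \<delta>" "\<And>y. \<bar>y - x\<bar> < \<delta> \<Longrightarrow> H y p0 < lam \<and> lam + c < H y q"
proof -
  define c where "c = (H x q - lam) / 2"
  have "0 < c" "lam + c < H x q" using assms(2) by (simp_all add: c_def field_simps)
  then have "\<forall>\<^sub>F y in nhds x. H y p0 < lam \<and> lam + c < H y q"
    using eventually_conj[OF eventually_H_less[OF assms(1)] eventually_H_greater] by blast
  then obtain \<delta> where "0 < \<delta>" "\<And>y. dist y x < \<delta> \<Longrightarrow> H y p0 < lam \<and> lam + c < H y q"
    unfolding eventually_nhds_metric by blast
  then show thesis using that[OF \<open>0 < c\<close>] by (simp add: dist_real_def)
qed

lemma abs_le_if_H_le: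
  assumes "H x p \<le> lam"
  shows "\<bar>p\<bar> \<le> max 1 ((lam + 1 / \<alpha>0) / \<alpha>0)"
proof (cases "\<bar>p\<bar> \<le> 1")
  case False
  then have "\<bar>p\<bar> powr 1 \<le> \<bar>p\<bar> powr \<gamma>" using \<gamma>_ge_1 by (intro powr_mono) auto
  then have "\<alpha>0 * \<bar>p\<bar> \<le> \<alpha>0 * \<bar>p\<bar> powr \<gamma>" using False \<alpha>0_pos by simp
  also have "\<dots> \<le> lam + 1 / \<alpha>0" using H_lower[of p x] assms by linarith
  finally have "\<bar>p\<bar> \<le> (lam + 1 / \<alpha>0) / \<alpha>0" using \<alpha>0_pos by (simp add: le_divide_eq mult.commute)
  then show ?thesis by simp
qed simp

lemma bdd_above_sublevel: "bdd_above {p. H x p \<le> lam}"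
  using abs_le_if_H_le by (intro bdd_aboveI[where M = "max 1 ((lam + 1 / \<alpha>0) / \<alpha>0)"]) (auto simp: abs_le_iff)

lemma hat_lambda_le: "hat_lambda H x \<le> \<alpha>1"
proof -
  have "- 1 / \<alpha>0 \<le> H x p" for p
  proof -
    have "0 \<le> \<alpha>0 * \<bar>p\<bar> powr \<gamma>" using \<alpha>0_pos by simp
    then show ?thesis using H_lower[of p x] by simp
  qed
  then have "bdd_below (range (H x))" by (intro bdd_belowI2)
  then have "Inf (range (H x)) \<le> H x 0" by (simp add: cInf_lower)
  then show ?thesis unfolding hat_lambda_def using H_zero_le[of x] by linarith
qed

lemma ex_H_less_if_hat_lambda_less:
  assumes "hat_lambda H x < lam"
  obtains p where "H x p < lam"
  using assms cInf_lessD[of "range (H x)" lam] unfolding hat_lambda_def by auto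

lemma le_p_plus: "H x p \<le> lam \<Longrightarrow> p \<le> p_plus H lam x"
  unfolding p_plus_def using bdd_above_sublevel by (auto intro: cSup_upper)

lemma p_plus_le:
  assumes "H x p0 \<le> lam" "p0 < q" "lam < H x q"
  shows "p_plus H lam x \<le> q"
  unfolding p_plus_def
proof (rule cSup_least)
  show "{p. H x p \<le> lam} \<noteq> {}" using assms(1) by blast
  show "p \<le> q" if "p \<in> {p. H x p \<le> lam}" for p
    using strictly_quasiconvex_rises_right[OF quasiconvex[of x] assms(2), of p] assms that
    by (cases "p \<le> q") auto
qed

lemma abs_p_plus_le:
  assumes "H x p \<le> lam"
  shows "\<bar>p_plus H lam x\<bar> \<le> max 1 ((lam + 1 / \<alpha>0) / \<alpha>0)"
proof -
  have "p_plus H lam x \<le> max 1 ((lam + 1 / \<alpha>0) / \<alpha>0)"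
    unfolding p_plus_def using assms abs_le_if_H_le by (intro cSup_least) (auto simp: abs_le_iff)
  moreover have "- max 1 ((lam + 1 / \<alpha>0) / \<alpha>0) \<le> p_plus H lam x"
    using le_p_plus[OF assms] abs_le_if_H_le[OF assms] by linarith
  ultimately show ?thesis by linarith
qed

lemma H_less_above:
  assumes "H x p0 < lam" "r < p_plus H lam x"
  obtains p1 where "r < p1" "H x p1 < lam"
proof -
  have "{p. H x p \<le> lam} \<noteq> {}" using assms(1) less_imp_le by blast
  then obtain p where p: "r < p" "H x p \<le> lam"
    using assms(2) less_cSupD[of "{p. H x p \<le> lam}" r] unfolding p_plus_def by blast
  show thesis
  proof (cases "p0 < p")
    case True
    define p1 where "p1 = (max r p0 + p) / 2"
    have "H x p1 < max (H x p0) (H x p)"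
      using strictly_quasiconvexD[OF quasiconvex, of p0 p1 p] True p by (simp add: p1_def)
    then show thesis using that[of p1] True p assms(1) by (simp add: p1_def)
  next
    case False
    then show thesis using that[of p0] p assms(1) by simp
  qed
qed

lemma isCont_p_plus:
  assumes "H x p0 < lam"
  shows "isCont (p_plus H lam) x"
  unfolding isCont_def
proof (rule order_tendstoI)
  fix r assume "r < p_plus H lam x"
  then obtain p1 where "r < p1" "H x p1 < lam" using H_less_above[OF assms] by blast
  show "\<forall>\<^sub>F y in at x. r < p_plus H lam y"
    using eventually_at_H_less[OF \<open>H x p1 < lam\<close>]
    by (rule eventually_mono) (use le_p_plus less_imp_le \<open>r < p1\<close> in fastforce)
next
  fix q assume "p_plus H lam x < q"
  define q' where "q' = (p_plus H lam x + q) / 2"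
  have "lam < H x q'"
  proof (rule ccontr)
    assume "\<not> lam < H x q'"
    then show False using le_p_plus[of x q' lam] \<open>p_plus H lam x < q\<close> by (simp add: q'_def)
  qed
  moreover have "p0 < q'" using le_p_plus[of x p0 lam] assms \<open>p_plus H lam x < q\<close> by (simp add: q'_def)
  ultimately have "\<forall>\<^sub>F y in nhds x. p_plus H lam y \<le> q'"
    using eventually_conj[OF eventually_H_less[OF assms] eventually_H_greater[of lam x q']]
    by (auto elim!: eventually_mono intro: p_plus_le less_imp_le)
  then have "\<forall>\<^sub>F y in at x. p_plus H lam y \<le> q'"
    unfolding eventually_at_filter by (auto elim: eventually_mono)
  then show "\<forall>\<^sub>F y in at x. p_plus H lam y < q"
    using \<open>p_plus H lam x < q\<close> by (auto elim: eventually_mono simp: q'_def)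
qed

end

locale extended_solution = sqc_hamiltonian +
  fixes a f f' :: "real \<Rightarrow> real" and lam K :: real
  assumes a_cont: "continuous_on UNIV a" and a_nonneg: "\<And>x. 0 \<le> a x"
    and a_quadratic: "\<And>z w. a w = 0 \<Longrightarrow> a z \<le> K\<^sup>2 * (z - w)\<^sup>2" and K_pos: "0 < K"
    and subcritical_at_zeros: "\<And>x. a x = 0 \<Longrightarrow> \<exists>p. H x p < lam"
    and f_deriv: "\<And>x. 0 < a x \<Longrightarrow> (f has_real_derivative f' x) (at x)"
    and f_eq: "\<And>x. 0 < a x \<Longrightarrow> a x * f' x + H x (f x) = lam"
    and f_bdd: "bounded (f ` {x. 0 < a x})"
    and f_ext: "\<And>x. a x = 0 \<Longrightarrow> f x = p_plus H lam x"
begin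

lemma open_positivity_set: "open {x. 0 < a x}"
  using open_vimage[OF open_greaterThan a_cont] by (simp add: vimage_def)

lemma f_bounded: obtains B where "\<And>x. \<bar>f x\<bar> \<le> B"
proof -
  obtain B0 where B0: "\<And>x. 0 < a x \<Longrightarrow> \<bar>f x\<bar> \<le> B0"
    using f_bdd unfolding bounded_iff by auto
  have "\<bar>f x\<bar> \<le> max B0 (max 1 ((lam + 1 / \<alpha>0) / \<alpha>0))" for x
  proof (cases "0 < a x")
    case False
    then have "a x = 0" using a_nonneg[of x] by simp
    then obtain p where "H x p < lam" using subcritical_at_zeros by blast
    then show ?thesis using abs_p_plus_le[of x p lam] f_ext[OF \<open>a x = 0\<close>] by simp
  qed (use B0 in force)
  then show thesis using that by blast
qed

lemma f_measurable: "f \<in> borel_measurable lebesgue"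
proof (rule borel_measurable_lebesgue_piecewise_continuous[OF open_positivity_set])
  show "continuous_on {x. 0 < a x} f"
    using f_deriv by (intro continuous_at_imp_continuous_on) (auto intro: DERIV_isCont)
  have "continuous_on (- {x. 0 < a x}) (p_plus H lam)"
  proof (intro continuous_at_imp_continuous_on ballI)
    fix x assume "x \<in> - {x. 0 < a x}"
    then have "a x = 0" using a_nonneg[of x] by simp
    then show "isCont (p_plus H lam) x" using subcritical_at_zeros isCont_p_plus by blast
  qed
  then show "continuous_on (- {x. 0 < a x}) f"
    by (rule continuous_on_eq) (use a_nonneg f_ext in \<open>force simp: order_le_less\<close>)
qed

lemma f_integrable: "f integrable_on {s..t}"
  using f_bounded integrable_on_interval_bounded_measurable[OF f_measurable] by metis

lemma prim0_f_lipschitz: "\<exists>L. L-lipschitz_on UNIV (prim0 f)"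
  using f_bounded prim0_lipschitz[OF f_measurable] by metis

lemma f'_le_where_H_large:
  assumes "0 < a z" "lam + c < H z (f z)"
  shows "f' z \<le> - c / a z"
proof -
  have "f' z * a z \<le> - c" using f_eq[OF assms(1)] assms(2) by (simp add: algebra_simps)
  then have "f' z \<le> (- c) / a z" using assms(1) by (subst pos_le_divide_eq) auto
  then show ?thesis by simp
qed

lemma f_le_right_of_zero:
  assumes "a x0 = 0" "H x0 p0 < lam" "p0 < q" "lam < H x0 q"
  obtains \<delta> where "0 < \<delta>" "\<And>y. x0 \<le> y \<Longrightarrow> y < x0 + \<delta> \<Longrightarrow> f y \<le> q"
proof -
  obtain c \<delta> where "0 < c" "0 < \<delta>"
    and near: "\<And>y. \<bar>y - x0\<bar> < \<delta> \<Longrightarrow> H y p0 < lam \<and> lam + c < H y q"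
    using H_separation_near[OF assms(2,4)] by blast
  obtain B where B: "\<And>x. \<bar>f x\<bar> \<le> B" using f_bounded by blast
  have "f y \<le> q" if "x0 \<le> y" "y < x0 + \<delta>" for y
  proof (cases "a y = 0")
    case True
    have "\<bar>y - x0\<bar> < \<delta>" using that by simp
    then have "H y p0 < lam" "lam < H y q" using near[of y] \<open>0 < c\<close> by auto
    then show ?thesis using p_plus_le[of y p0 lam q] \<open>p0 < q\<close> f_ext[OF True] by simp
  next
    case False
    then have "0 < a y" using a_nonneg[of y] by simp
    show ?thesis
    proof (rule ode_barrier_right[OF a_cont a_nonneg a_quadratic K_pos \<open>a x0 = 0\<close> \<open>x0 \<le> y\<close> \<open>0 < a y\<close> \<open>0 < c\<close> f_deriv B])
      show "f' z \<le> - c / a z" if "x0 \<le> z" "z \<le> y" "0 < a z" "q < f z" for z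
      proof (rule f'_le_where_H_large[OF \<open>0 < a z\<close>])
        have "H z p0 < lam" "lam + c < H z q" using near[of z] that \<open>y < x0 + \<delta>\<close> by auto
        then show "lam + c < H z (f z)"
          using strictly_quasiconvex_rises_right[OF quasiconvex[of z] \<open>p0 < q\<close> \<open>q < f z\<close>] \<open>0 < c\<close> by simp
      qed
    qed
  qed
  then show thesis using that \<open>0 < \<delta>\<close> by blast
qed

lemma f_ge_left_of_zero:
  assumes "a x0 = 0" "H x0 p0 < lam" "q < p0" "lam < H x0 q"
  obtains \<delta> where "0 < \<delta>" "\<And>y. x0 - \<delta> < y \<Longrightarrow> y \<le> x0 \<Longrightarrow> q \<le> f y"
proof -
  obtain c \<delta> where "0 < c" "0 < \<delta>"
    and near: "\<And>y. \<bar>y - x0\<bar> < \<delta> \<Longrightarrow> H y p0 < lam \<and> lam + c < H y q"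
    using H_separation_near[OF assms(2,4)] by blast
  obtain B where B: "\<And>x. \<bar>f x\<bar> \<le> B" using f_bounded by blast
  have "q \<le> f y" if "x0 - \<delta> < y" "y \<le> x0" for y
  proof (cases "a y = 0")
    case True
    have "\<bar>y - x0\<bar> < \<delta>" using that by simp
    then show ?thesis using near[of y] le_p_plus[of y p0 lam] \<open>q < p0\<close> f_ext[OF True] by simp
  next
    case False
    then have "0 < a y" using a_nonneg[of y] by simp
    show ?thesis
    proof (rule ode_barrier_left[OF a_cont a_nonneg a_quadratic K_pos \<open>a x0 = 0\<close> \<open>y \<le> x0\<close> \<open>0 < a y\<close> \<open>0 < c\<close> f_deriv B])
      show "f' z \<le> - c / a z" if "y \<le> z" "z \<le> x0" "0 < a z" "f z < q" for z
      proof (rule f'_le_where_H_large[OF \<open>0 < a z\<close>])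
        have "H z p0 < lam" "lam + c < H z q" using near[of z] that \<open>x0 - \<delta> < y\<close> by auto
        then show "lam + c < H z (f z)"
          using strictly_quasiconvex_rises_left[OF quasiconvex[of z] \<open>f z < q\<close> \<open>q < p0\<close>] \<open>0 < c\<close> by simp
      qed
    qed
  qed
  then show thesis using that \<open>0 < \<delta>\<close> by blast
qed

lemma supersolution_test_positive:
  assumes "C2_with \<phi> \<phi>' \<phi>''" "touches_below \<phi> (prim0 f) x0" "0 < a x0"
  shows "a x0 * \<phi>'' x0 + H x0 (\<phi>' x0) \<le> lam"
proof -
  obtain e where "0 < e" and ball: "ball x0 e \<subseteq> {x. 0 < a x}"
    using open_positivity_set \<open>0 < a x0\<close> open_contains_ball by blast
  have u_deriv: "(prim0 f has_real_derivative f y) (at y)" if "\<bar>y - x0\<bar> < e" for y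
  proof (rule prim0_has_real_derivative[OF f_integrable])
    have "y \<in> ball x0 e" using that by (simp add: dist_real_def abs_minus_commute)
    then have "0 < a y" using ball by blast
    then show "isCont f y" using f_deriv DERIV_isCont by blast
  qed
  have \<phi>_deriv: "(\<phi> has_real_derivative \<phi>' y) (at y)" "(\<phi>' has_real_derivative \<phi>'' y) (at y)" for y
    using assms(1) unfolding C2_with_def by auto
  have "\<phi>' x0 = f x0"
    using touches_below_derivative_eq[OF assms(2) \<phi>_deriv(1) u_deriv] \<open>0 < e\<close> by simp
  moreover have "\<phi>'' x0 \<le> f' x0"
    using touches_below_second_derivative_le[OF assms(2) \<open>0 < e\<close> u_deriv \<phi>_deriv(1)
        f_deriv[OF \<open>0 < a x0\<close>] \<phi>_deriv(2)] .
  moreover have "a x0 * \<phi>'' x0 \<le> a x0 * f' x0"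
    using calculation(2) \<open>0 < a x0\<close> by (simp add: mult_left_mono)
  ultimately show ?thesis using f_eq[OF \<open>0 < a x0\<close>] by simp
qed

lemma supersolution_test_zero:
  assumes "C2_with \<phi> \<phi>' \<phi>''" "touches_below \<phi> (prim0 f) x0" "a x0 = 0"
  shows "H x0 (\<phi>' x0) \<le> lam"
proof (rule ccontr)
  assume "\<not> H x0 (\<phi>' x0) \<le> lam"
  then have H_P: "lam < H x0 (\<phi>' x0)" by simp
  have \<phi>_deriv: "(\<phi> has_real_derivative \<phi>' x0) (at x0)" using assms(1) unfolding C2_with_def by blast
  obtain p0 where "H x0 p0 < lam" using subcritical_at_zeros[OF assms(3)] by blast
  then consider "p0 < \<phi>' x0" | "\<phi>' x0 < p0" using H_P by fastforce
  then show False
  proof cases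
    case 1
    then obtain q where "p0 < q" "q < \<phi>' x0" "lam < H x0 q" using H_greater_left_of[OF H_P] by blast
    then obtain \<delta> where "0 < \<delta>" "\<And>y. x0 \<le> y \<Longrightarrow> y < x0 + \<delta> \<Longrightarrow> f y \<le> q"
      using f_le_right_of_zero[OF assms(3) \<open>H x0 p0 < lam\<close>] by blast
    then have "prim0 f y \<le> prim0 f x0 + q * (y - x0)" if "x0 \<le> y" "y < x0 + \<delta>" for y
      using prim0_diff_le[OF f_integrable that(1), of q] that by simp
    then have "\<phi>' x0 \<le> q" using touches_below_slope_right[OF assms(2) \<phi>_deriv \<open>0 < \<delta>\<close>] by blast
    then show False using \<open>q < \<phi>' x0\<close> by simp
  next
    case 2
    then obtain q where "\<phi>' x0 < q" "q < p0" "lam < H x0 q" using H_greater_right_of[OF H_P] by blast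
    then obtain \<delta> where "0 < \<delta>" "\<And>y. x0 - \<delta> < y \<Longrightarrow> y \<le> x0 \<Longrightarrow> q \<le> f y"
      using f_ge_left_of_zero[OF assms(3) \<open>H x0 p0 < lam\<close>] by blast
    then have "prim0 f y \<le> prim0 f x0 + q * (y - x0)" if "x0 - \<delta> < y" "y \<le> x0" for y
      using prim0_diff_ge[OF f_integrable that(2), of q] that by (simp add: algebra_simps)
    then have "q \<le> \<phi>' x0" using touches_below_slope_left[OF assms(2) \<phi>_deriv \<open>0 < \<delta>\<close>] by blast
    then show False using \<open>\<phi>' x0 < q\<close> by simp
  qed
qed

lemma visc_supersol_prim0: "visc_supersol a H lam (prim0 f)"
proof (rule visc_supersolI)
  show "continuous_on UNIV (prim0 f)"
    using prim0_f_lipschitz lipschitz_on_continuous_on by blast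
  fix \<phi> \<phi>' \<phi>'' x0
  assume "C2_with \<phi> \<phi>' \<phi>''" "touches_below \<phi> (prim0 f) x0"
  then show "a x0 * \<phi>'' x0 + H x0 (\<phi>' x0) \<le> lam"
    using supersolution_test_positive supersolution_test_zero a_nonneg[of x0]
    by (cases "a x0 = 0") auto
qed

end

lemma continuous_on_if_sqrt_lipschitz:
  fixes a :: "real \<Rightarrow> real"
  assumes "\<kappa>-lipschitz_on UNIV (\<lambda>x. sqrt (a x))" "\<And>x. 0 \<le> a x"
  shows "continuous_on UNIV a"
proof -
  have "continuous_on UNIV (\<lambda>x. (sqrt (a x))\<^sup>2)"
    using lipschitz_on_continuous_on[OF assms(1)] by (rule continuous_on_power)
  moreover have "(\<lambda>x. (sqrt (a x))\<^sup>2) = a" using assms(2) by (simp add: fun_eq_iff)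
  ultimately show ?thesis by metis
qed

lemma quadratic_bound_if_sqrt_lipschitz:
  fixes a :: "real \<Rightarrow> real"
  assumes "\<kappa>-lipschitz_on UNIV (\<lambda>x. sqrt (a x))" "\<And>x. 0 \<le> a x" "a w = 0"
  shows "a z \<le> \<kappa>\<^sup>2 * (z - w)\<^sup>2"
proof -
  have "sqrt (a z) \<le> \<kappa> * \<bar>z - w\<bar>"
    using lipschitz_onD[OF assms(1), of z w] assms(3) by (simp add: dist_real_def)
  then have "(sqrt (a z))\<^sup>2 \<le> (\<kappa> * \<bar>z - w\<bar>)\<^sup>2" using assms(2)[of z] by (intro power_mono) simp_all
  then show ?thesis using assms(2)[of z] by (simp add: power_mult_distrib)
qed

theorem mainTheorem15:
  fixes a :: "real \<Rightarrow> real" and H :: "real \<Rightarrow> real \<Rightarrow> real"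
    and f f' :: "real \<Rightarrow> real"
    and \<kappa> \<alpha>0 \<alpha>1 \<gamma> \<eta> lam :: real
  assumes a_range: "\<forall>x. 0 \<le> a x \<and> a x \<le> 1"
    and a_lip: "\<kappa>-lipschitz_on UNIV (\<lambda>x. sqrt (a x))"
    and a_nonzero: "\<exists>x. a x \<noteq> 0"
    and A_comp: "\<forall>x\<in>{x. a x > 0}. is_interval (connected_component_set {x. a x > 0} x)
                     \<and> bounded (connected_component_set {x. a x > 0} x)"
    and params: "0 < \<alpha>0" "0 < \<alpha>1" "\<gamma> > 2" "\<eta> > 0"
    and H_class: "H_sqc \<alpha>0 \<alpha>1 \<gamma> \<eta> H"
    and lam_gt: "lam > Sup (hat_lambda H ` {x. a x = 0})"
    and f_deriv: "\<forall>x\<in>{x. a x > 0}. (f has_real_derivative f' x) (at x)"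
    and f'_cont: "continuous_on {x. a x > 0} f'"
    and f_bdd: "bounded (f ` {x. a x > 0})"
    and f_eq: "\<forall>x\<in>{x. a x > 0}. a x * f' x + H x (f x) = lam"
    and f_ext: "\<forall>x. a x = 0 \<longrightarrow> f x = p_plus H lam x"
  shows "(\<exists>L. L-lipschitz_on UNIV (prim0 f)) \<and> visc_supersol a H lam (prim0 f)"
proof -
  interpret sqc_hamiltonian \<alpha>0 \<alpha>1 \<gamma> \<eta> H
    using H_class params by unfold_locales simp_all
  have a_nonneg: "\<And>x. 0 \<le> a x" using a_range by blast
  have a_lip': "(\<kappa> + 1)-lipschitz_on UNIV (\<lambda>x. sqrt (a x))"
    using lipschitz_on_le[OF a_lip] by simp
  have "\<exists>p. H x p < lam" if "a x = 0" for x
  proof -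
    have "hat_lambda H x \<le> Sup (hat_lambda H ` {x. a x = 0})"
      using that hat_lambda_le by (intro cSup_upper bdd_aboveI2) auto
    then show ?thesis using lam_gt ex_H_less_if_hat_lambda_less by (meson le_less_trans)
  qed
  moreover have "0 < \<kappa> + 1" using lipschitz_on_nonneg[OF a_lip] by simp
  ultimately interpret extended_solution \<alpha>0 \<alpha>1 \<gamma> \<eta> H a f f' lam "\<kappa> + 1"
    using continuous_on_if_sqrt_lipschitz[OF a_lip a_nonneg] quadratic_bound_if_sqrt_lipschitz[OF a_lip' a_nonneg]
      a_nonneg f_deriv f_eq f_bdd f_ext by unfold_locales auto
  show ?thesis using prim0_f_lipschitz visc_supersol_prim0 by blast
qed

end
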